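(* Let $\mathcal{G}$ be a family of nonatomic routing problems with homogeneous users and let $T$ be an incentive mechanism on $L(\mathcal{G})$. For $\lambda>0$ define the incentive mechanism $T_\lambda(\ell)=\lambda T(\ell)+(\lambda-1)\ell$ for $\ell\in L(\mathcal{G})$. Then $\mathrm{PoA}(\mathcal{G},T)=\mathrm{PoA}(\mathcal{G},T_\lambda)$.
   Context: A routing problem $G$ consists of a directed graph $(V,E)$, origin–destination pairs $(o_i,d_i)$ with traffic masses $r_i>0$, $\sum_i r_i=1$, and for each edge $e$ a nonnegative nondecreasing latency function $\ell_e$. Let $\mathcal{P}_i$ be the set of simple $o_i$–$d_i$ paths. A flow assigns mass $f_P\ge0$ to each path, is feasible if $\sum_{P\in\mathcal{P}_i}f_P=r_i$, and has edge flows $f_e=\sum_{P\ni e}f_P$; its total latency is $\mathcal{L}(f)=\sum_e f_e\ell_e(f_e)$, and $\mathcal{L}^{\mathrm{opt}}(G)$ is the minimum over feasible flows. Users form a continuum $N=\bigcup_iN_i$ of disjoint intervals of Lebesgue measure $r_i$; users in $N_i$ choose paths in $\mathcal{P}_i$. For a family $\mathcal{G}$, $L(\mathcal{G})$ is the set of latency functions occurring in it. An incentive mechanism $T$ assigns to each $\ell\in L(\mathcal{G})$ a function $T(\ell):[0,1]\to\mathbb{R}$; edge $e$ receives $\tau_e=T(\ell_e)$. With homogeneous users, a user $x\in N_i$ on path $P$ under flow $f$ has cost $J_x(P,f)=\sum_{e\in P}(\ell_e(f_e)+\tau_e(f_e))$; a Nash flow is a feasible flow in which every user uses a cost-minimizing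 path in $\mathcal{P}_i$. $\mathcal{L}^{\mathrm{Nash}}(G,T)$ is the highest total latency of a Nash flow, and $\mathrm{PoA}(\mathcal{G},T)=\sup_{G\in\mathcal{G}}\mathcal{L}^{\mathrm{Nash}}(G,T)/\mathcal{L}^{\mathrm{opt}}(G)$. *)

theory Defs
  imports "HOL-Analysis.Analysis" "HOL-Library.Extended_Real"
begin

record ('v, 'e) routing =
  verts :: "'v set"
  edges :: "'e set"
  tail  :: "'e \<Rightarrow> 'v"
  head  :: "'e \<Rightarrow> 'v"
  comms :: "nat set"
  orig  :: "nat \<Rightarrow> 'v"
  dest  :: "nat \<Rightarrow> 'v"
  mass  :: "nat \<Rightarrow> real"
  lat   :: "'e \<Rightarrow> real \<Rightarrow> real"

definition wf_routing :: "('v, 'e) routing \<Rightarrow> bool" where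
  "wf_routing G \<longleftrightarrow>
     finite (verts G) \<and> finite (edges G) \<and>
     (\<forall>e\<in>edges G. tail G e \<in> verts G \<and> head G e \<in> verts G) \<and>
     finite (comms G) \<and> comms G \<noteq> {} \<and>
     (\<forall>i\<in>comms G. orig G i \<in> verts G \<and> dest G i \<in> verts G \<and> mass G i > 0) \<and>
     (\<Sum>i\<in>comms G. mass G i) = 1 \<and>
     (\<forall>e\<in>edges G. (\<forall>x\<ge>0. lat G e x \<ge> 0) \<and> mono_on {0..} (lat G e))"

definition simple_path :: "('v, 'e) routing \<Rightarrow> 'v \<Rightarrow> 'v \<Rightarrow> 'e list \<Rightarrow> bool" where
  "simple_path G o' d es \<longleftrightarrow> set es \<subseteq> edges G \<and>
     (\<exists>vs. length vs = Suc (length es) \<and> hd vs = o' \<and> last vs = d \<and> distinct vs \<and>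
        set vs \<subseteq> verts G \<and>
        (\<forall>k<length es. tail G (es ! k) = vs ! k \<and> head G (es ! k) = vs ! Suc k))"

definition paths :: "('v, 'e) routing \<Rightarrow> nat \<Rightarrow> 'e list set" where
  "paths G i = {P. simple_path G (orig G i) (dest G i) P}"

type_synonym 'e flow = "nat \<Rightarrow> 'e list \<Rightarrow> real"

definition feasible :: "('v, 'e) routing \<Rightarrow> 'e flow \<Rightarrow> bool" where
  "feasible G f \<longleftrightarrow>
     (\<forall>i P. f i P \<ge> 0) \<and>
     (\<forall>i P. (i \<notin> comms G \<or> P \<notin> paths G i) \<longrightarrow> f i P = 0) \<and>
     (\<forall>i\<in>comms G. (\<Sum>P\<in>paths G i. f i P) = mass G i)"

definition edge_flow :: "('v, 'e) routing \<Rightarrow> 'e flow \<Rightarrow> 'e \<Rightarrow> real" where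
  "edge_flow G f e = (\<Sum>i\<in>comms G. \<Sum>P\<in>{P\<in>paths G i. e \<in> set P}. f i P)"

definition total_latency :: "('v, 'e) routing \<Rightarrow> 'e flow \<Rightarrow> real" where
  "total_latency G f = (\<Sum>e\<in>edges G. edge_flow G f e * lat G e (edge_flow G f e))"

definition L_opt :: "('v, 'e) routing \<Rightarrow> ereal" where
  "L_opt G = (INF f\<in>{f. feasible G f}. ereal (total_latency G f))"

text \<open>An incentive mechanism maps latency functions to incentive functions;
  edge e receives T (lat G e).\<close>
type_synonym mechanism = "(real \<Rightarrow> real) \<Rightarrow> (real \<Rightarrow> real)"

definition path_cost :: "('v, 'e) routing \<Rightarrow> mechanism \<Rightarrow> 'e flow \<Rightarrow> 'e list \<Rightarrow> real" where
  "path_cost G T f P =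
     (\<Sum>e\<in>set P. lat G e (edge_flow G f e) + T (lat G e) (edge_flow G f e))"

definition nash_flow :: "('v, 'e) routing \<Rightarrow> mechanism \<Rightarrow> 'e flow \<Rightarrow> bool" where
  "nash_flow G T f \<longleftrightarrow> feasible G f \<and>
     (\<forall>i\<in>comms G. \<forall>P\<in>paths G i. f i P > 0 \<longrightarrow>
        (\<forall>Q\<in>paths G i. path_cost G T f P \<le> path_cost G T f Q))"

definition L_nash :: "('v, 'e) routing \<Rightarrow> mechanism \<Rightarrow> ereal" where
  "L_nash G T = (SUP f\<in>{f. nash_flow G T f}. ereal (total_latency G f))"

definition PoA :: "('v, 'e) routing set \<Rightarrow> mechanism \<Rightarrow> ereal" where
  "PoA \<G> T = (SUP G\<in>\<G>. L_nash G T / L_opt G)"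

definition scaled_mech :: "real \<Rightarrow> mechanism \<Rightarrow> mechanism" where
  "scaled_mech c T = (\<lambda>l x. c * T l x + (c - 1) * l x)"

end

theory Submission
  imports Defs
begin

text \<open>Under the scaled mechanism every edge cost \<open>l + T l\<close> becomes \<open>c (l + T l)\<close>, so
  every path cost is multiplied by \<open>c > 0\<close>. Hence both mechanisms have exactly the same
  Nash flows, on every network.\<close>

lemma path_cost_scaled_mech:
  "path_cost G (scaled_mech c T) f P = c * path_cost G T f P"
  unfolding path_cost_def scaled_mech_def sum_distrib_left
  by (rule sum.cong) (simp_all add: algebra_simps)

lemma nash_flow_scaled_mech_iff:
  assumes "c > 0"
  shows "nash_flow G (scaled_mech c T) f \<longleftrightarrow> nash_flow G T f"
  unfolding nash_flow_def path_cost_scaled_mech using assms by simp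

lemma L_nash_scaled_mech:
  assumes "c > 0"
  shows "L_nash G (scaled_mech c T) = L_nash G T"
  unfolding L_nash_def nash_flow_scaled_mech_iff[OF assms] ..

theorem lemma1:
  fixes \<G> :: "('v, 'e) routing set" and T :: mechanism and c :: real
  assumes "\<forall>G\<in>\<G>. wf_routing G"
    and "c > 0"
  shows "PoA \<G> T = PoA \<G> (scaled_mech c T)"
  unfolding PoA_def L_nash_scaled_mech[OF assms(2)] ..

end
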